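(* Let $R$ be an inp-minimal integral domain with maximal ideal $\mathfrak M$. If $R$ contains an infinite set $F$ such that $F-F\subseteq R^\times\cup\{0\}$, then $R$ is a valuation ring. In particular: (1) if $R/\mathfrak M$ is infinite then $R$ is a valuation ring; (2) if $R$ has an infinite subring which is a field then $R$ is a valuation ring.
   Context: Rings are commutative with identity. Inp-minimal: the theory of $R$ in the language of rings has burden $1$ (such a domain is local). A domain $R$ is a valuation ring if for every nonzero $x$ in its fraction field, $x\in R$ or $x^{-1}\in R$. *)

theory Defs
  imports Main "HOL-Computational_Algebra.Fraction_Field"
begin

datatype rterm = Var nat | Zero | One | Add rterm rterm | Neg rterm | Mul rterm rterm

datatype rform = Eq rterm rterm | Neg_f rform | Conj rform rform | Ex nat rform

fun teval :: "(nat \<Rightarrow> 'a::comm_ring_1) \<Rightarrow> rterm \<Rightarrow> 'a" where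
  "teval e (Var v) = e v"
| "teval e Zero = 0"
| "teval e One = 1"
| "teval e (Add s t) = teval e s + teval e t"
| "teval e (Neg s) = - teval e s"
| "teval e (Mul s t) = teval e s * teval e t"

fun sat :: "(nat \<Rightarrow> 'a::comm_ring_1) \<Rightarrow> rform \<Rightarrow> bool" where
  "sat e (Eq s t) = (teval e s = teval e t)"
| "sat e (Neg_f p) = (\<not> sat e p)"
| "sat e (Conj p q) = (sat e p \<and> sat e q)"
| "sat e (Ex v p) = (\<exists>a. sat (e(v := a)) p)"

text \<open>Formulas phi(x; y) use variable 0 as the object variable x (a single variable,
  since the burden of the theory is the burden of the home sort x = x);
  all other variables are parameters, supplied by an assignment b.\<close>

definition inp_pattern ::
  "nat \<Rightarrow> (nat \<Rightarrow> rform) \<Rightarrow> (nat \<Rightarrow> nat) \<Rightarrow> nat \<Rightarrow> (nat \<Rightarrow> nat \<Rightarrow> nat \<Rightarrow> 'a::comm_ring_1) \<Rightarrow> bool"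
where
  "inp_pattern d phi k n b \<longleftrightarrow>
     (\<forall>i<d. \<forall>J. J \<subseteq> {..<n} \<and> card J = k i \<longrightarrow>
         \<not> (\<exists>a::'a. \<forall>j\<in>J. sat ((b i j)(0 := a)) (phi i))) \<and>
     (\<forall>f. (\<forall>i<d. f i < n) \<longrightarrow> (\<exists>a::'a. \<forall>i<d. sat ((b i (f i))(0 := a)) (phi i)))"

text \<open>By compactness (the theory of R is complete), an inp-pattern of depth d with
  infinite rows exists in the monster model of Th(R) iff for the same formulas and
  the same k, finite patterns of every width n exist in R itself.\<close>

definition burden_ge :: "'a::comm_ring_1 itself \<Rightarrow> nat \<Rightarrow> bool" where
  "burden_ge (_::'a itself) d \<longleftrightarrow>
     (\<exists>phi k. \<forall>n. \<exists>b :: nat \<Rightarrow> nat \<Rightarrow> nat \<Rightarrow> 'a. inp_pattern d phi k n b)"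

definition inp_minimal :: "'a::comm_ring_1 itself \<Rightarrow> bool" where
  "inp_minimal T \<longleftrightarrow> burden_ge T 1 \<and> \<not> burden_ge T 2"

definition valuation_ring :: "'a::idom itself \<Rightarrow> bool" where
  "valuation_ring (_::'a itself) \<longleftrightarrow>
     (\<forall>x :: 'a fract. x \<noteq> 0 \<longrightarrow>
        x \<in> range (\<lambda>r::'a. Fract r 1) \<or> inverse x \<in> range (\<lambda>r::'a. Fract r 1))"

definition is_ideal :: "'a::comm_ring_1 set \<Rightarrow> bool" where
  "is_ideal I \<longleftrightarrow> 0 \<in> I \<and> (\<forall>a\<in>I. \<forall>b\<in>I. a + b \<in> I) \<and> (\<forall>r. \<forall>a\<in>I. r * a \<in> I)"

definition maximal_ideal :: "'a::comm_ring_1 set \<Rightarrow> bool" where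
  "maximal_ideal M \<longleftrightarrow> is_ideal M \<and> M \<noteq> UNIV \<and>
     (\<forall>I. is_ideal I \<and> M \<subseteq> I \<longrightarrow> I = M \<or> I = UNIV)"

definition residue_field :: "'a::comm_ring_1 set \<Rightarrow> 'a set set" where
  "residue_field M = UNIV // {(a, b). a - b \<in> M}"

definition subring :: "'a::comm_ring_1 set \<Rightarrow> bool" where
  "subring S \<longleftrightarrow> 0 \<in> S \<and> 1 \<in> S \<and>
     (\<forall>a\<in>S. \<forall>b\<in>S. a + b \<in> S \<and> a * b \<in> S) \<and> (\<forall>a\<in>S. - a \<in> S)"

definition subfield :: "'a::comm_ring_1 set \<Rightarrow> bool" where
  "subfield S \<longleftrightarrow> subring S \<and> (\<forall>a\<in>S. a \<noteq> 0 \<longrightarrow> (\<exists>b\<in>S. a * b = 1))"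

end

theory Submission
  imports Defs
begin

text \<open>If R is not a valuation ring, pick a, b in R with neither dividing the other, and
  distinct elements c_0, c_1, ... of F. The cosets c_j a + bR are pairwise disjoint: as
  c_j - c_j' is a unit, b dividing (c_j - c_j') a would mean b dividing a. Likewise the
  cosets c_j b + aR are pairwise disjoint. But c_j a + bR and c_k b + aR always share
  c_j a + c_k b. This is an inp-pattern of depth 2 for the formula y | x - z, contradicting
  inp-minimality. The same kind of pattern, built from the powers of the comaximal elements
  u and 1 - u, shows that one of them is a unit: R is local, so its maximal ideal consists
  of the non-units. Hence representatives of distinct residue classes, and distinct elements
  of a subfield, have unit differences.\<close>

definition dvd_diff_formula :: rform where
  "dvd_diff_formula = Ex 3 (Eq (Var 0) (Add (Var 1) (Mul (Var 2) (Var 3))))"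

lemma sat_dvd_diff_formula: "sat e dvd_diff_formula \<longleftrightarrow> e 2 dvd e 0 - e 1"
  unfolding dvd_diff_formula_def by (auto simp: dvd_def algebra_simps eq_diff_eq)

definition congruence_pattern :: "nat \<Rightarrow> 'a::comm_ring_1 \<Rightarrow> (nat \<Rightarrow> 'a) \<Rightarrow> 'a \<Rightarrow> (nat \<Rightarrow> 'a) \<Rightarrow> bool"
where
  "congruence_pattern n q\<^sub>0 p\<^sub>0 q\<^sub>1 p\<^sub>1 \<longleftrightarrow>
     (\<forall>j<n. \<forall>j'<n. q\<^sub>0 dvd p\<^sub>0 j - p\<^sub>0 j' \<longrightarrow> j = j') \<and>
     (\<forall>j<n. \<forall>j'<n. q\<^sub>1 dvd p\<^sub>1 j - p\<^sub>1 j' \<longrightarrow> j = j') \<and>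
     (\<forall>j<n. \<forall>k<n. \<exists>x. q\<^sub>0 dvd x - p\<^sub>0 j \<and> q\<^sub>1 dvd x - p\<^sub>1 k)"

lemma burden_ge_2_if_congruence_patterns:
  fixes T :: "'a::comm_ring_1 itself"
  assumes "\<And>n. \<exists>q\<^sub>0 p\<^sub>0 q\<^sub>1 p\<^sub>1 :: _ \<Rightarrow> 'a. congruence_pattern n q\<^sub>0 p\<^sub>0 q\<^sub>1 p\<^sub>1"
  shows "burden_ge T 2"
proof -
  have "\<exists>b :: nat \<Rightarrow> nat \<Rightarrow> nat \<Rightarrow> 'a. inp_pattern 2 (\<lambda>_. dvd_diff_formula) (\<lambda>_. 2) n b" for n
  proof -
    obtain q\<^sub>0 q\<^sub>1 :: 'a and p\<^sub>0 p\<^sub>1 where pat: "congruence_pattern n q\<^sub>0 p\<^sub>0 q\<^sub>1 p\<^sub>1"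
      using assms by blast
    define q where "q i = (if i = 0 then q\<^sub>0 else q\<^sub>1)" for i :: nat
    define p where "p i = (if i = 0 then p\<^sub>0 else p\<^sub>1)" for i :: nat
    define b :: "nat \<Rightarrow> nat \<Rightarrow> nat \<Rightarrow> 'a" where "b i j v = (if v = 1 then p i j else q i)" for i j v
    have sat_b: "sat ((b i j)(0 := x)) dvd_diff_formula \<longleftrightarrow> q i dvd x - p i j" for i j x
      by (simp add: sat_dvd_diff_formula b_def)
    have rows: "q i dvd p i j - p i j' \<Longrightarrow> j = j'" if "i < 2" "j < n" "j' < n" for i j j'
      using pat that unfolding congruence_pattern_def p_def q_def by (auto simp: less_2_cases_iff)
    have "inp_pattern 2 (\<lambda>_. dvd_diff_formula) (\<lambda>_. 2) n b"
      unfolding inp_pattern_def sat_b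
    proof (intro conjI allI impI notI)
      fix i J
      assume "i < 2" and J: "J \<subseteq> {..<n} \<and> card J = 2"
        and "\<exists>x. \<forall>j\<in>J. q i dvd x - p i j"
      then obtain j j' x where "J = {j, j'}" "j \<noteq> j'" "q i dvd x - p i j" "q i dvd x - p i j'"
        by (auto simp: card_2_iff)
      moreover from this(3,4) have "q i dvd (x - p i j) - (x - p i j')"
        by (rule dvd_diff)
      ultimately show False using rows[OF \<open>i < 2\<close>] J by auto
    next
      fix f :: "nat \<Rightarrow> nat"
      assume "\<forall>i<2. f i < n"
      then have "f 0 < n" "f 1 < n" by auto
      then obtain x where "q\<^sub>0 dvd x - p\<^sub>0 (f 0)" "q\<^sub>1 dvd x - p\<^sub>1 (f 1)"
        using pat unfolding congruence_pattern_def by blast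
      then show "\<exists>x. \<forall>i<2. q i dvd x - p i (f i)"
        by (auto simp: p_def q_def less_2_cases_iff)
    qed
    then show ?thesis by blast
  qed
  then show ?thesis unfolding burden_ge_def by blast
qed

lemma valuation_ring_iff_dvd_total:
  "valuation_ring (T :: 'a::idom itself) \<longleftrightarrow> (\<forall>a b :: 'a. a dvd b \<or> b dvd a)"
proof
  assume val: "valuation_ring T"
  show "\<forall>a b :: 'a. a dvd b \<or> b dvd a"
  proof (intro allI)
    fix a b :: 'a
    show "a dvd b \<or> b dvd a"
    proof (cases "a = 0 \<or> b = 0")
      case False
      then have "Fract a b \<noteq> 0" by (simp add: eq_fract Zero_fract_def)
      then have "Fract a b \<in> range (\<lambda>r. Fract r 1) \<or> Fract b a \<in> range (\<lambda>r. Fract r 1)"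
        using val unfolding valuation_ring_def by (metis inverse_fract)
      then show ?thesis using False by (auto simp: eq_fract)
    qed auto
  qed
next
  assume total: "\<forall>a b :: 'a. a dvd b \<or> b dvd a"
  show "valuation_ring T"
    unfolding valuation_ring_def
  proof (intro allI impI)
    fix x :: "'a fract"
    assume "x \<noteq> 0"
    then obtain a b where x: "x = Fract a b" "a \<noteq> 0" "b \<noteq> 0"
      by (cases x rule: Fract_cases_nonzero) auto
    have "Fract (c * d) c = Fract d 1" if "c \<noteq> 0" for c d :: 'a
      using that by (simp add: eq_fract)
    then show "x \<in> range (\<lambda>r. Fract r 1) \<or> inverse x \<in> range (\<lambda>r. Fract r 1)"
      using total[rule_format, of a b] x by (auto elim!: dvdE)
  qed
qed

lemma dvd_unit_mult_iff:
  fixes u :: "'a::comm_semiring_1"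
  assumes "u dvd 1"
  shows "a dvd u * b \<longleftrightarrow> a dvd b"
proof
  obtain v where "1 = u * v" using assms by (rule dvdE)
  then have "b = u * b * v" by (simp add: ac_simps)
  moreover assume "a dvd u * b"
  ultimately show "a dvd b" by (metis dvd_mult2)
qed simp

lemma valuation_ring_if_unit_differences:
  fixes T :: "'a::idom itself" and F :: "'a set"
  assumes burden: "\<not> burden_ge T 2" and "infinite F"
    and F: "\<forall>a\<in>F. \<forall>b\<in>F. (a - b) dvd 1 \<or> a - b = 0"
  shows "valuation_ring T"
  unfolding valuation_ring_iff_dvd_total
proof (intro allI, rule ccontr)
  fix a b :: 'a
  assume "\<not> (a dvd b \<or> b dvd a)"
  then have "\<not> a dvd b" and "\<not> b dvd a" by auto
  obtain c :: "nat \<Rightarrow> 'a" where "inj c" "range c \<subseteq> F"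
    using infinite_countable_subset[OF \<open>infinite F\<close>] by blast
  have unit_diff: "(c j - c j') dvd 1" if "j \<noteq> j'" for j j'
  proof -
    have "c j \<noteq> c j'" using \<open>inj c\<close> that by (simp add: inj_eq)
    moreover have "c j \<in> F" "c j' \<in> F" using \<open>range c \<subseteq> F\<close> by auto
    ultimately show ?thesis using F by auto
  qed
  have row: "j = j'" if "\<not> q dvd r" "q dvd c j * r - c j' * r" for q r j j'
  proof (rule ccontr)
    assume "j \<noteq> j'"
    have "q dvd (c j - c j') * r" using that(2) by (simp add: left_diff_distrib)
    then show False using that(1) dvd_unit_mult_iff[OF unit_diff[OF \<open>j \<noteq> j'\<close>]] by simp
  qed
  have "congruence_pattern n b (\<lambda>j. c j * a) a (\<lambda>j. c j * b)" for n
    unfolding congruence_pattern_def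
  proof (intro conjI allI impI)
    fix j k
    show "\<exists>x. b dvd x - c j * a \<and> a dvd x - c k * b"
      by (rule exI[of _ "c j * a + c k * b"]) simp
  qed (use row \<open>\<not> a dvd b\<close> \<open>\<not> b dvd a\<close> in blast)+
  then have "burden_ge T 2" by (blast intro: burden_ge_2_if_congruence_patterns)
  with burden show False ..
qed

lemma power_dvd_diff_powers_imp_eq:
  fixes v :: "'a::idom"
  assumes "\<not> v dvd 1" "v \<noteq> 0" "j < n" "k < n" "v ^ n dvd v ^ j - v ^ k"
  shows "j = k"
proof -
  have "\<not> v ^ n dvd v ^ j - v ^ k" if "j < k" "k < n" for j k
  proof
    assume "v ^ n dvd v ^ j - v ^ k"
    moreover have "v ^ j - v ^ k = v ^ j * (1 - v ^ (k - j))" "v ^ n = v ^ j * v ^ (n - j)"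
      using that by (simp_all add: right_diff_distrib flip: power_add)
    ultimately have "v ^ (n - j) dvd 1 - v ^ (k - j)"
      using \<open>v \<noteq> 0\<close> by simp
    moreover have "v dvd v ^ (n - j)" "v dvd v ^ (k - j)"
      using that by (simp_all add: dvd_power)
    ultimately have "v dvd (1 - v ^ (k - j)) + v ^ (k - j)"
      by (blast intro: dvd_add dvd_trans)
    with \<open>\<not> v dvd 1\<close> show False by simp
  qed
  moreover have "v ^ n dvd v ^ k - v ^ j"
    using \<open>v ^ n dvd v ^ j - v ^ k\<close> by (metis dvd_minus_iff minus_diff_eq)
  ultimately show "j = k"
    using assms by (metis linorder_neqE_nat)
qed

lemma comaximal_power:
  fixes a b :: "'a::comm_ring_1"
  assumes "a * s + b * t = 1"
  shows "\<exists>s' t'. a ^ n * s' + b * t' = 1"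
proof (induction n)
  case 0
  show ?case by (intro exI[of _ 1] exI[of _ 0]) simp
next
  case (Suc n)
  then obtain s' t' where "a ^ n * s' + b * t' = 1" by blast
  then have "1 = (a ^ n * s' + b * t') * (a * s + b * t)" using assms by simp
  also have "\<dots> = a ^ Suc n * (s' * s) + b * (a ^ n * s' * t + t' * a * s + t' * b * t)"
    by (simp add: algebra_simps)
  finally show ?case by metis
qed

lemma chinese_remainder_dvd:
  fixes q\<^sub>0 q\<^sub>1 :: "'a::comm_ring_1"
  assumes "q\<^sub>0 * s + q\<^sub>1 * t = 1"
  shows "\<exists>x. q\<^sub>0 dvd x - y\<^sub>0 \<and> q\<^sub>1 dvd x - y\<^sub>1"
proof
  define x where "x = y\<^sub>0 * q\<^sub>1 * t + y\<^sub>1 * q\<^sub>0 * s"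
  have "x - y\<^sub>0 = x - y\<^sub>0 * (q\<^sub>0 * s + q\<^sub>1 * t)" "x - y\<^sub>1 = x - y\<^sub>1 * (q\<^sub>0 * s + q\<^sub>1 * t)"
    using assms by simp_all
  then have "x - y\<^sub>0 = q\<^sub>0 * (s * (y\<^sub>1 - y\<^sub>0))" "x - y\<^sub>1 = q\<^sub>1 * (t * (y\<^sub>0 - y\<^sub>1))"
    by (simp_all add: x_def algebra_simps)
  then show "q\<^sub>0 dvd x - y\<^sub>0 \<and> q\<^sub>1 dvd x - y\<^sub>1" by simp
qed

lemma unit_or_one_minus_unit:
  fixes T :: "'a::idom itself" and u :: 'a
  assumes burden: "\<not> burden_ge T 2"
  shows "u dvd 1 \<or> (1 - u) dvd 1"
proof (rule ccontr)
  assume "\<not> (u dvd 1 \<or> (1 - u) dvd 1)"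
  then have "\<not> u dvd 1" "\<not> (1 - u) dvd 1" "u \<noteq> 0" "1 - u \<noteq> 0" by auto
  have "congruence_pattern n (u ^ n) (\<lambda>j. u ^ j) ((1 - u) ^ n) (\<lambda>j. (1 - u) ^ j)" for n
  proof -
    obtain s t where "u ^ n * s + (1 - u) * t = 1"
      using comaximal_power[of u 1 "1 - u" 1 n] by auto
    then obtain s' t' where "(1 - u) ^ n * t' + u ^ n * s' = 1"
      using comaximal_power[of "1 - u" t "u ^ n" s n] by (auto simp: ac_simps)
    then have "\<exists>x. u ^ n dvd x - u ^ j \<and> (1 - u) ^ n dvd x - (1 - u) ^ k" for j k
      by (intro chinese_remainder_dvd[of _ s' _ t']) (simp add: ac_simps)
    then show ?thesis
      unfolding congruence_pattern_def
      using power_dvd_diff_powers_imp_eq \<open>\<not> u dvd 1\<close> \<open>\<not> (1 - u) dvd 1\<close> \<open>u \<noteq> 0\<close> \<open>1 - u \<noteq> 0\<close>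
      by blast
  qed
  then have "burden_ge T 2" by (blast intro: burden_ge_2_if_congruence_patterns)
  with burden show False ..
qed

lemma is_ideal_nonunits:
  assumes local: "\<And>u::'a::comm_ring_1. u dvd 1 \<or> (1 - u) dvd 1"
  shows "is_ideal {a::'a. \<not> a dvd 1}"
  unfolding is_ideal_def
proof (intro conjI ballI allI; clarsimp)
  fix a b :: 'a
  assume "\<not> a dvd 1" "\<not> b dvd 1" "(a + b) dvd 1"
  from \<open>(a + b) dvd 1\<close> obtain v where "1 = (a + b) * v" by (rule dvdE)
  then have "1 - a * v = b * v" by (simp add: algebra_simps)
  with local[of "a * v"] have "a * v dvd 1 \<or> b * v dvd 1" by simp
  with \<open>\<not> a dvd 1\<close> \<open>\<not> b dvd 1\<close> show False
    by (blast dest: dvd_mult_left)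
qed (use dvd_mult_right in \<open>auto simp: mult.commute\<close>)

lemma maximal_ideal_eq_nonunits:
  fixes M :: "'a::comm_ring_1 set"
  assumes local: "\<And>u::'a. u dvd 1 \<or> (1 - u) dvd 1"
    and "maximal_ideal M"
  shows "M = {a. \<not> a dvd 1}"
proof -
  have M: "is_ideal M" "M \<noteq> UNIV" "\<And>I. is_ideal I \<Longrightarrow> M \<subseteq> I \<Longrightarrow> I = M \<or> I = UNIV"
    using \<open>maximal_ideal M\<close> unfolding maximal_ideal_def by blast+
  have "M \<subseteq> {a. \<not> a dvd 1}"
  proof (intro subsetI CollectI notI)
    fix a assume "a \<in> M" "a dvd 1"
    from \<open>a dvd 1\<close> obtain v where "1 = a * v" by (rule dvdE)
    then have "r = (r * v) * a" for r by (metis mult.assoc mult.commute mult_1_right)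
    then have "r \<in> M" for r using M(1) \<open>a \<in> M\<close> unfolding is_ideal_def by metis
    with M(2) show False by blast
  qed
  then have "{a. \<not> a dvd 1} = M \<or> {a. \<not> a dvd 1} = (UNIV :: 'a set)"
    by (rule M(3)[OF is_ideal_nonunits[OF local]])
  moreover have "(1::'a) \<notin> {a. \<not> a dvd 1}" by simp
  ultimately show ?thesis by (metis UNIV_I)
qed

lemma equiv_ideal_congruence:
  assumes "is_ideal I"
  shows "equiv UNIV {(a, b). a - b \<in> I}"
proof (rule equivI)
  show "{(a, b). a - b \<in> I} \<subseteq> UNIV \<times> UNIV" by simp
  show "refl {(a, b). a - b \<in> I}"
    using assms by (simp add: refl_on_def is_ideal_def)
  show "sym {(a, b). a - b \<in> I}"
  proof (rule symI, clarsimp)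
    fix a b assume "a - b \<in> I"
    then have "(- 1) * (a - b) \<in> I" using assms unfolding is_ideal_def by blast
    then show "b - a \<in> I" by simp
  qed
  show "trans {(a, b). a - b \<in> I}"
  proof (rule transI, clarsimp)
    fix a b c assume "a - b \<in> I" "b - c \<in> I"
    then have "(a - b) + (b - c) \<in> I" using assms unfolding is_ideal_def by blast
    then show "a - c \<in> I" by simp
  qed
qed

lemma unit_differences_if_infinite_residue_field:
  fixes M :: "'a::comm_ring_1 set"
  assumes local: "\<And>u::'a. u dvd 1 \<or> (1 - u) dvd 1"
    and "maximal_ideal M" and "infinite (residue_field M)"
  shows "\<exists>F :: 'a set. infinite F \<and> (\<forall>a\<in>F. \<forall>b\<in>F. (a - b) dvd 1 \<or> a - b = 0)"
proof -
  define rel where "rel = {(a, b :: 'a). a - b \<in> M}"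
  define cls where "cls a = rel `` {a}" for a
  have "equiv UNIV rel"
    using \<open>maximal_ideal M\<close> unfolding rel_def maximal_ideal_def by (blast intro: equiv_ideal_congruence)
  have "residue_field M = range cls"
    unfolding residue_field_def quotient_def rel_def cls_def by auto
  define F where "F = inv cls ` range cls"
  have "infinite F"
    using \<open>infinite (residue_field M)\<close> \<open>residue_field M = range cls\<close> inj_on_inv_into[of "range cls"]
    unfolding F_def by (metis finite_imageD subset_refl)
  moreover have "(a - b) dvd 1 \<or> a - b = 0" if "a \<in> F" "b \<in> F" for a b
  proof (cases "(a - b) dvd 1")
    case False
    then have "(a, b) \<in> rel"
      unfolding rel_def using maximal_ideal_eq_nonunits[OF local \<open>maximal_ideal M\<close>] by auto
    then have "inv cls (cls a) = inv cls (cls b)"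
      unfolding cls_def by (simp add: equiv_class_eq[OF \<open>equiv UNIV rel\<close>])
    moreover have "inv cls (cls c) = c" if "c \<in> F" for c
      using that unfolding F_def by (auto simp: f_inv_into_f)
    ultimately show ?thesis using \<open>a \<in> F\<close> \<open>b \<in> F\<close> by simp
  qed simp
  ultimately show ?thesis by blast
qed

lemma unit_differences_if_subfield:
  assumes "subfield S"
  shows "\<forall>a\<in>S. \<forall>b\<in>S. (a - b) dvd 1 \<or> a - b = 0"
proof (intro ballI)
  fix a b assume "a \<in> S" "b \<in> S"
  then have "a - b \<in> S"
    using assms unfolding subfield_def subring_def by (metis diff_conv_add_uminus)
  then show "(a - b) dvd 1 \<or> a - b = 0"
    using assms unfolding subfield_def by (metis dvdI)
qed

theorem mainTheorem8:
  fixes T :: "'a::idom itself" and M :: "'a set"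
  assumes inp: "inp_minimal T"
    and M: "maximal_ideal M"
  shows "((\<exists>F :: 'a set. infinite F \<and>
            (\<forall>a\<in>F. \<forall>b\<in>F. (a - b) dvd 1 \<or> a - b = 0)) \<longrightarrow> valuation_ring T)
       \<and> (infinite (residue_field M) \<longrightarrow> valuation_ring T)
       \<and> ((\<exists>S :: 'a set. subfield S \<and> infinite S) \<longrightarrow> valuation_ring T)"
proof -
  have burden: "\<not> burden_ge T 2"
    using inp unfolding inp_minimal_def by blast
  then have local: "\<And>u::'a. u dvd 1 \<or> (1 - u) dvd 1"
    by (rule unit_or_one_minus_unit)
  have valuation: "valuation_ring T"
    if "infinite F" "\<forall>a\<in>F. \<forall>b\<in>F. (a - b) dvd 1 \<or> a - b = 0" for F :: "'a set"
    using burden that by (rule valuation_ring_if_unit_differences)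
  show ?thesis
  proof (intro conjI impI)
    assume "\<exists>F :: 'a set. infinite F \<and> (\<forall>a\<in>F. \<forall>b\<in>F. (a - b) dvd 1 \<or> a - b = 0)"
    then show "valuation_ring T" using valuation by blast
  next
    assume "infinite (residue_field M)"
    then obtain F :: "'a set" where "infinite F" "\<forall>a\<in>F. \<forall>b\<in>F. (a - b) dvd 1 \<or> a - b = 0"
      using unit_differences_if_infinite_residue_field[OF local M] by blast
    then show "valuation_ring T" by (rule valuation)
  next
    assume "\<exists>S :: 'a set. subfield S \<and> infinite S"
    then obtain S :: "'a set" where "subfield S" "infinite S" by blast
    then show "valuation_ring T"
      by (intro valuation[of S] unit_differences_if_subfield)
  qed
qed

end
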